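(* Let $\mathcal{W}$ be a weakly exact structure on an additive category $\mathcal{A}$. (1) If $A\xrightarrow{i}B\xrightarrow{j}C$ are morphisms in $\mathcal{A}$ such that $i$ has a cokernel and $ji$ is an admissible monic of $\mathcal{W}$, then $i$ is an admissible monic of $\mathcal{W}$. (2) If $X\xrightarrow{f}Y\xrightarrow{g}Z$ are morphisms in $\mathcal{A}$ such that $g$ has a kernel and $gf$ is an admissible epic of $\mathcal{W}$, then $g$ is an admissible epic of $\mathcal{W}$.
   Context: Let $\mathcal{A}$ be an additive category. A kernel-cokernel pair (short exact sequence) is a pair of composable morphisms $A\xrightarrow{i}B\xrightarrow{d}C$ with $i$ a kernel of $d$ and $d$ a cokernel of $i$. A weakly exact structure on $\mathcal{A}$ is a class $\mathcal{W}$ of kernel-cokernel pairs, closed under isomorphisms of sequences and under finite direct sums of sequences, such that, calling $i$ an admissible monic (resp. $d$ an admissible epic) if $(i,d)\in\mathcal{W}$ for some $d$ (resp. some $i$): (E0) $1_A$ is an admissible monic for every object $A$; (E0)$^{op}$ $1_A$ is an admissible epic for every object $A$; (E2) for every admissible monic $i:A\to B$ and every morphism $t:A\to C$ the pushout of $i$ along $t$ exists and the resulting morphism $C\to S$ is an admissible monic; (E2)$^{op}$ for every admissible epic $h:A\to C$ and every morphism $t:B\to C$ the pullback of $h$ along $t$ exists and the resulting morphism $P\to B$ is an admissible epic. *)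

theory Defs
  imports Main
begin

text \<open>A category with abelian-group enriched hom-sets, presented concretely:
  objects, morphisms with domain/codomain, composition (cmp g f = g after f),
  identities, addition of parallel morphisms and zero morphisms.\<close>

record ('o, 'm) precat =
  obj :: "'o set"
  mor :: "'m set"
  dm  :: "'m \<Rightarrow> 'o"
  cd  :: "'m \<Rightarrow> 'o"
  cmp :: "'m \<Rightarrow> 'm \<Rightarrow> 'm"
  idt :: "'o \<Rightarrow> 'm"
  pls :: "'m \<Rightarrow> 'm \<Rightarrow> 'm"
  zro :: "'o \<Rightarrow> 'o \<Rightarrow> 'm"

definition hom :: "('o, 'm) precat \<Rightarrow> 'o \<Rightarrow> 'o \<Rightarrow> 'm set" where
  "hom C a b = {f \<in> mor C. dm C f = a \<and> cd C f = b}"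

definition category :: "('o, 'm) precat \<Rightarrow> bool" where
  "category C \<longleftrightarrow>
     (\<forall>f\<in>mor C. dm C f \<in> obj C \<and> cd C f \<in> obj C) \<and>
     (\<forall>a\<in>obj C. idt C a \<in> hom C a a) \<and>
     (\<forall>a b c f g. f \<in> hom C a b \<longrightarrow> g \<in> hom C b c \<longrightarrow> cmp C g f \<in> hom C a c) \<and>
     (\<forall>a b c d f g h. f \<in> hom C a b \<longrightarrow> g \<in> hom C b c \<longrightarrow> h \<in> hom C c d \<longrightarrow>
        cmp C h (cmp C g f) = cmp C (cmp C h g) f) \<and>
     (\<forall>a b f. f \<in> hom C a b \<longrightarrow> cmp C (idt C b) f = f \<and> cmp C f (idt C a) = f)"

definition preadditive :: "('o, 'm) precat \<Rightarrow> bool" where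
  "preadditive C \<longleftrightarrow> category C \<and>
     (\<forall>a\<in>obj C. \<forall>b\<in>obj C.
        zro C a b \<in> hom C a b \<and>
        (\<forall>f\<in>hom C a b. \<forall>g\<in>hom C a b. pls C f g \<in> hom C a b \<and> pls C f g = pls C g f) \<and>
        (\<forall>f\<in>hom C a b. \<forall>g\<in>hom C a b. \<forall>h\<in>hom C a b.
            pls C (pls C f g) h = pls C f (pls C g h)) \<and>
        (\<forall>f\<in>hom C a b. pls C f (zro C a b) = f) \<and>
        (\<forall>f\<in>hom C a b. \<exists>g\<in>hom C a b. pls C f g = zro C a b)) \<and>
     (\<forall>a b c f g h. f \<in> hom C a b \<longrightarrow> g \<in> hom C a b \<longrightarrow> h \<in> hom C b c \<longrightarrow>
        cmp C h (pls C f g) = pls C (cmp C h f) (cmp C h g)) \<and>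
     (\<forall>a b c f g h. h \<in> hom C a b \<longrightarrow> f \<in> hom C b c \<longrightarrow> g \<in> hom C b c \<longrightarrow>
        cmp C (pls C f g) h = pls C (cmp C f h) (cmp C g h))"

definition zero_object :: "('o, 'm) precat \<Rightarrow> 'o \<Rightarrow> bool" where
  "zero_object C z \<longleftrightarrow> z \<in> obj C \<and>
     (\<forall>a\<in>obj C. (\<exists>!f. f \<in> hom C z a) \<and> (\<exists>!f. f \<in> hom C a z))"

definition is_biproduct ::
  "('o, 'm) precat \<Rightarrow> 'o \<Rightarrow> 'o \<Rightarrow> 'o \<Rightarrow> 'm \<Rightarrow> 'm \<Rightarrow> 'm \<Rightarrow> 'm \<Rightarrow> bool" where
  "is_biproduct C a b s i1 i2 p1 p2 \<longleftrightarrow> s \<in> obj C \<and>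
     i1 \<in> hom C a s \<and> i2 \<in> hom C b s \<and> p1 \<in> hom C s a \<and> p2 \<in> hom C s b \<and>
     cmp C p1 i1 = idt C a \<and> cmp C p2 i2 = idt C b \<and>
     cmp C p1 i2 = zro C b a \<and> cmp C p2 i1 = zro C a b \<and>
     pls C (cmp C i1 p1) (cmp C i2 p2) = idt C s"

definition additive_cat :: "('o, 'm) precat \<Rightarrow> bool" where
  "additive_cat C \<longleftrightarrow> preadditive C \<and> (\<exists>z. zero_object C z) \<and>
     (\<forall>a\<in>obj C. \<forall>b\<in>obj C. \<exists>s i1 i2 p1 p2. is_biproduct C a b s i1 i2 p1 p2)"

definition is_kernel :: "('o, 'm) precat \<Rightarrow> 'm \<Rightarrow> 'm \<Rightarrow> bool" where
  "is_kernel C i d \<longleftrightarrow> i \<in> mor C \<and> d \<in> mor C \<and> cd C i = dm C d \<and>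
     cmp C d i = zro C (dm C i) (cd C d) \<and>
     (\<forall>x\<in>obj C. \<forall>t\<in>hom C x (dm C d). cmp C d t = zro C x (cd C d) \<longrightarrow>
        (\<exists>!u. u \<in> hom C x (dm C i) \<and> cmp C i u = t))"

definition is_cokernel :: "('o, 'm) precat \<Rightarrow> 'm \<Rightarrow> 'm \<Rightarrow> bool" where
  "is_cokernel C d i \<longleftrightarrow> i \<in> mor C \<and> d \<in> mor C \<and> cd C i = dm C d \<and>
     cmp C d i = zro C (dm C i) (cd C d) \<and>
     (\<forall>x\<in>obj C. \<forall>t\<in>hom C (cd C i) x. cmp C t i = zro C (dm C i) x \<longrightarrow>
        (\<exists>!u. u \<in> hom C (cd C d) x \<and> cmp C u d = t))"

definition kc_pair :: "('o, 'm) precat \<Rightarrow> 'm \<Rightarrow> 'm \<Rightarrow> bool" where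
  "kc_pair C i d \<longleftrightarrow> is_kernel C i d \<and> is_cokernel C d i"

definition has_kernel :: "('o, 'm) precat \<Rightarrow> 'm \<Rightarrow> bool" where
  "has_kernel C d \<longleftrightarrow> (\<exists>i. is_kernel C i d)"

definition has_cokernel :: "('o, 'm) precat \<Rightarrow> 'm \<Rightarrow> bool" where
  "has_cokernel C i \<longleftrightarrow> (\<exists>d. is_cokernel C d i)"

definition iso :: "('o, 'm) precat \<Rightarrow> 'm \<Rightarrow> bool" where
  "iso C f \<longleftrightarrow> f \<in> mor C \<and>
     (\<exists>g\<in>hom C (cd C f) (dm C f). cmp C g f = idt C (dm C f) \<and> cmp C f g = idt C (cd C f))"

definition adm_monic :: "('m \<times> 'm) set \<Rightarrow> 'm \<Rightarrow> bool" where
  "adm_monic W i \<longleftrightarrow> (\<exists>d. (i, d) \<in> W)"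

definition adm_epic :: "('m \<times> 'm) set \<Rightarrow> 'm \<Rightarrow> bool" where
  "adm_epic W d \<longleftrightarrow> (\<exists>i. (i, d) \<in> W)"

definition is_pushout :: "('o, 'm) precat \<Rightarrow> 'm \<Rightarrow> 'm \<Rightarrow> 'm \<Rightarrow> 'm \<Rightarrow> bool" where
  "is_pushout C i t t' i' \<longleftrightarrow> i \<in> mor C \<and> t \<in> mor C \<and> t' \<in> mor C \<and> i' \<in> mor C \<and>
     dm C t = dm C i \<and> dm C t' = cd C i \<and> dm C i' = cd C t \<and> cd C t' = cd C i' \<and>
     cmp C t' i = cmp C i' t \<and>
     (\<forall>x\<in>obj C. \<forall>u\<in>hom C (cd C i) x. \<forall>v\<in>hom C (cd C t) x. cmp C u i = cmp C v t \<longrightarrow>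
        (\<exists>!w. w \<in> hom C (cd C t') x \<and> cmp C w t' = u \<and> cmp C w i' = v))"

definition is_pullback :: "('o, 'm) precat \<Rightarrow> 'm \<Rightarrow> 'm \<Rightarrow> 'm \<Rightarrow> 'm \<Rightarrow> bool" where
  "is_pullback C h t h' t' \<longleftrightarrow> h \<in> mor C \<and> t \<in> mor C \<and> h' \<in> mor C \<and> t' \<in> mor C \<and>
     cd C t = cd C h \<and> cd C h' = dm C t \<and> cd C t' = dm C h \<and> dm C h' = dm C t' \<and>
     cmp C h t' = cmp C t h' \<and>
     (\<forall>x\<in>obj C. \<forall>u\<in>hom C x (dm C h). \<forall>v\<in>hom C x (dm C t). cmp C h u = cmp C t v \<longrightarrow>
        (\<exists>!w. w \<in> hom C x (dm C h') \<and> cmp C t' w = u \<and> cmp C h' w = v))"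

text \<open>Direct sum f (+) g of morphisms, w.r.t. chosen biproduct data
  (projections q1, q2 of the source, injections j1, j2 of the target).\<close>
definition dsum_mor :: "('o, 'm) precat \<Rightarrow> 'm \<Rightarrow> 'm \<Rightarrow> 'm \<Rightarrow> 'm \<Rightarrow> 'm \<Rightarrow> 'm \<Rightarrow> 'm" where
  "dsum_mor C f g q1 q2 j1 j2 = pls C (cmp C j1 (cmp C f q1)) (cmp C j2 (cmp C g q2))"

definition weakly_exact :: "('o, 'm) precat \<Rightarrow> ('m \<times> 'm) set \<Rightarrow> bool" where
  "weakly_exact C W \<longleftrightarrow>
     (\<forall>(i, d)\<in>W. kc_pair C i d) \<and>
     \<comment> \<open>closed under isomorphisms of sequences\<close>
     (\<forall>i d i' d' \<alpha> \<beta> \<gamma>. (i, d) \<in> W \<longrightarrow> i' \<in> mor C \<longrightarrow> d' \<in> mor C \<longrightarrow> cd C i' = dm C d' \<longrightarrow>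
        \<alpha> \<in> hom C (dm C i) (dm C i') \<longrightarrow> \<beta> \<in> hom C (cd C i) (cd C i') \<longrightarrow>
        \<gamma> \<in> hom C (cd C d) (cd C d') \<longrightarrow> iso C \<alpha> \<longrightarrow> iso C \<beta> \<longrightarrow> iso C \<gamma> \<longrightarrow>
        cmp C \<beta> i = cmp C i' \<alpha> \<longrightarrow> cmp C \<gamma> d = cmp C d' \<beta> \<longrightarrow> (i', d') \<in> W) \<and>
     \<comment> \<open>closed under (binary, hence finite) direct sums of sequences\<close>
     (\<forall>i1 d1 i2 d2 sa ja1 ja2 qa1 qa2 sb jb1 jb2 qb1 qb2 sc jc1 jc2 qc1 qc2.
        (i1, d1) \<in> W \<longrightarrow> (i2, d2) \<in> W \<longrightarrow>
        is_biproduct C (dm C i1) (dm C i2) sa ja1 ja2 qa1 qa2 \<longrightarrow>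
        is_biproduct C (cd C i1) (cd C i2) sb jb1 jb2 qb1 qb2 \<longrightarrow>
        is_biproduct C (cd C d1) (cd C d2) sc jc1 jc2 qc1 qc2 \<longrightarrow>
        (dsum_mor C i1 i2 qa1 qa2 jb1 jb2, dsum_mor C d1 d2 qb1 qb2 jc1 jc2) \<in> W) \<and>
     \<comment> \<open>(E0) and (E0)op\<close>
     (\<forall>a\<in>obj C. adm_monic W (idt C a)) \<and>
     (\<forall>a\<in>obj C. adm_epic W (idt C a)) \<and>
     \<comment> \<open>(E2)\<close>
     (\<forall>i t. adm_monic W i \<longrightarrow> t \<in> mor C \<longrightarrow> dm C t = dm C i \<longrightarrow>
        (\<exists>t' i'. is_pushout C i t t' i' \<and> adm_monic W i')) \<and>
     \<comment> \<open>(E2)op\<close>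
     (\<forall>h t. adm_epic W h \<longrightarrow> t \<in> mor C \<longrightarrow> cd C t = cd C h \<longrightarrow>
        (\<exists>h' t'. is_pullback C h t h' t' \<and> adm_epic W h'))"

end

theory Submission
  imports Defs
begin

text \<open>
  Let \<open>k\<close> be a cokernel of \<open>i : A \<rightarrow> B\<close>, let \<open>j : B \<rightarrow> C\<close> and \<open>(j \<circ> i, p) \<in> W\<close>.
  By (E2) the pushout \<open>i' : B \<rightarrow> S\<close> of \<open>j \<circ> i\<close> along \<open>i\<close> is an admissible monic, and
  its cokernel \<open>\<rho>\<close> is induced by \<open>p\<close>, so \<open>i'\<close> is a kernel of \<open>\<rho>\<close>. In any preadditive
  category this pushout is \<open>S = C \<oplus> coker i\<close> with \<open>i' = (j, k)\<close>, and then
  \<open>\<rho> = (p, -b)\<close> where \<open>b \<circ> k = p \<circ> j\<close>. Hence \<open>B\<close>, a kernel of \<open>\<rho>\<close>, is the pullback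
  of \<open>p\<close> along \<open>b\<close>, and \<open>k\<close> is the pullback of \<open>p\<close>. By (E2)op and uniqueness of
  pullbacks \<open>k\<close> is an admissible epic, and \<open>i\<close>, a kernel of \<open>k\<close>, is an admissible monic.
  Part (2) is part (1) in the opposite category.
\<close>

section \<open>Preadditive categories\<close>

locale preadditive_category =
  fixes C :: "('o, 'm) precat"
  assumes preadditive: "preadditive C"
begin

abbreviation arr :: "'m \<Rightarrow> bool" where "arr f \<equiv> f \<in> mor C"

lemma category: "category C"
  using preadditive unfolding preadditive_def by blast

lemma in_hom_iff: "f \<in> hom C a b \<longleftrightarrow> arr f \<and> dm C f = a \<and> cd C f = b"
  unfolding hom_def by auto

lemma dm_obj [simp]: "arr f \<Longrightarrow> dm C f \<in> obj C"
  and cd_obj [simp]: "arr f \<Longrightarrow> cd C f \<in> obj C"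
  using category unfolding category_def by blast+

lemma comp_in_hom: "f \<in> hom C a b \<Longrightarrow> g \<in> hom C b c \<Longrightarrow> cmp C g f \<in> hom C a c"
  using category unfolding category_def by blast

lemma comp_arr [simp]: "arr f \<Longrightarrow> arr g \<Longrightarrow> cd C f = dm C g \<Longrightarrow> arr (cmp C g f)"
  and dm_comp [simp]: "arr f \<Longrightarrow> arr g \<Longrightarrow> cd C f = dm C g \<Longrightarrow> dm C (cmp C g f) = dm C f"
  and cd_comp [simp]: "arr f \<Longrightarrow> arr g \<Longrightarrow> cd C f = dm C g \<Longrightarrow> cd C (cmp C g f) = cd C g"
  using comp_in_hom[of f "dm C f" "cd C f" g "cd C g"] by (auto simp: in_hom_iff)

lemma comp_assoc:
  "arr f \<Longrightarrow> arr g \<Longrightarrow> arr h \<Longrightarrow> cd C f = dm C g \<Longrightarrow> cd C g = dm C h \<Longrightarrow>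
   cmp C h (cmp C g f) = cmp C (cmp C h g) f"
  using category unfolding category_def
  by (auto simp: in_hom_iff dest!: spec[of _ "dm C f"] spec[of _ "cd C f"] spec[of _ "cd C g"] spec[of _ "cd C h"])

lemma id_arr [simp]: "a \<in> obj C \<Longrightarrow> arr (idt C a)"
  and dm_id [simp]: "a \<in> obj C \<Longrightarrow> dm C (idt C a) = a"
  and cd_id [simp]: "a \<in> obj C \<Longrightarrow> cd C (idt C a) = a"
  using category unfolding category_def in_hom_iff by blast+

lemma comp_id_left [simp]: "arr f \<Longrightarrow> cd C f = b \<Longrightarrow> cmp C (idt C b) f = f"
  and comp_id_right [simp]: "arr f \<Longrightarrow> dm C f = a \<Longrightarrow> cmp C f (idt C a) = f"
  using category unfolding category_def in_hom_iff by blast+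

lemma zero_arr [simp]: "a \<in> obj C \<Longrightarrow> b \<in> obj C \<Longrightarrow> arr (zro C a b)"
  and dm_zero [simp]: "a \<in> obj C \<Longrightarrow> b \<in> obj C \<Longrightarrow> dm C (zro C a b) = a"
  and cd_zero [simp]: "a \<in> obj C \<Longrightarrow> b \<in> obj C \<Longrightarrow> cd C (zro C a b) = b"
  using preadditive unfolding preadditive_def in_hom_iff by blast+

lemma hom_abelian_group:
  assumes "a \<in> obj C" "b \<in> obj C"
  shows "zro C a b \<in> hom C a b \<and>
    (\<forall>f\<in>hom C a b. \<forall>g\<in>hom C a b. pls C f g \<in> hom C a b \<and> pls C f g = pls C g f) \<and>
    (\<forall>f\<in>hom C a b. \<forall>g\<in>hom C a b. \<forall>h\<in>hom C a b. pls C (pls C f g) h = pls C f (pls C g h)) \<and>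
    (\<forall>f\<in>hom C a b. pls C f (zro C a b) = f) \<and>
    (\<forall>f\<in>hom C a b. \<exists>g\<in>hom C a b. pls C f g = zro C a b)"
  using assms preadditive[unfolded preadditive_def, THEN conjunct2, THEN conjunct1] by blast

lemma add_in_hom:
  "arr f \<Longrightarrow> arr g \<Longrightarrow> dm C g = dm C f \<Longrightarrow> cd C g = cd C f \<Longrightarrow>
   pls C f g \<in> hom C (dm C f) (cd C f)"
  using hom_abelian_group[of "dm C f" "cd C f"] by (simp add: in_hom_iff)

lemma add_arr [simp]:
    "arr f \<Longrightarrow> arr g \<Longrightarrow> dm C g = dm C f \<Longrightarrow> cd C g = cd C f \<Longrightarrow> arr (pls C f g)"
  and dm_add [simp]:
    "arr f \<Longrightarrow> arr g \<Longrightarrow> dm C g = dm C f \<Longrightarrow> cd C g = cd C f \<Longrightarrow> dm C (pls C f g) = dm C f"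
  and cd_add [simp]:
    "arr f \<Longrightarrow> arr g \<Longrightarrow> dm C g = dm C f \<Longrightarrow> cd C g = cd C f \<Longrightarrow> cd C (pls C f g) = cd C f"
  using add_in_hom unfolding in_hom_iff by blast+

lemma add_commute:
  assumes "arr f" "arr g" "dm C g = dm C f" "cd C g = cd C f"
  shows "pls C f g = pls C g f"
proof -
  have "f \<in> hom C (dm C f) (cd C f)" "g \<in> hom C (dm C f) (cd C f)"
    using assms by (simp_all add: in_hom_iff)
  then show ?thesis using hom_abelian_group[OF dm_obj[OF assms(1)] cd_obj[OF assms(1)]] by blast
qed

lemma add_assoc:
  assumes "arr f" "arr g" "arr h" "dm C g = dm C f" "cd C g = cd C f" "dm C h = dm C f" "cd C h = cd C f"
  shows "pls C (pls C f g) h = pls C f (pls C g h)"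
proof -
  have "f \<in> hom C (dm C f) (cd C f)" "g \<in> hom C (dm C f) (cd C f)" "h \<in> hom C (dm C f) (cd C f)"
    using assms by (simp_all add: in_hom_iff)
  then show ?thesis using hom_abelian_group[OF dm_obj[OF assms(1)] cd_obj[OF assms(1)]] by blast
qed

lemma add_zero_right [simp]: "arr f \<Longrightarrow> dm C f = a \<Longrightarrow> cd C f = b \<Longrightarrow> pls C f (zro C a b) = f"
  using hom_abelian_group[of a b] by (auto simp: in_hom_iff)

lemma add_zero_left [simp]:
  assumes "arr f" "dm C f = a" "cd C f = b"
  shows "pls C (zro C a b) f = f"
proof -
  have "a \<in> obj C" "b \<in> obj C" using assms by auto
  then show ?thesis using assms add_commute[of "zro C a b" f] by simp
qed

lemma add_inverse_exists:
  assumes "arr f"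
  obtains g where "arr g" "dm C g = dm C f" "cd C g = cd C f" "pls C f g = zro C (dm C f) (cd C f)"
proof -
  have "f \<in> hom C (dm C f) (cd C f)" using assms by (simp add: in_hom_iff)
  then have "\<exists>g\<in>hom C (dm C f) (cd C f). pls C f g = zro C (dm C f) (cd C f)"
    using hom_abelian_group[OF dm_obj[OF assms] cd_obj[OF assms]] by blast
  then show ?thesis using that by (auto simp: in_hom_iff)
qed

lemma add_right_cancel:
  assumes "arr f" "arr g" "arr h" "dm C g = dm C f" "cd C g = cd C f" "dm C h = dm C f"
    "cd C h = cd C f" "pls C f h = pls C g h"
  shows "f = g"
proof -
  obtain h' where h': "arr h'" "dm C h' = dm C h" "cd C h' = cd C h"
    and hh': "pls C h h' = zro C (dm C h) (cd C h)"
    using add_inverse_exists[OF assms(3)] .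
  have "f = pls C f (pls C h h')" using assms hh' by simp
  also have "\<dots> = pls C g (pls C h h')"
    using assms h' by (simp add: add_assoc[symmetric])
  also have "\<dots> = g" using assms hh' by simp
  finally show ?thesis .
qed

lemma comp_distrib_left:
  "arr f \<Longrightarrow> arr g \<Longrightarrow> arr h \<Longrightarrow> dm C g = dm C f \<Longrightarrow> cd C g = cd C f \<Longrightarrow> dm C h = cd C f \<Longrightarrow>
   cmp C h (pls C f g) = pls C (cmp C h f) (cmp C h g)"
  using preadditive unfolding preadditive_def
  by (auto simp: in_hom_iff dest!: spec[of _ "dm C f"] spec[of _ "cd C f"] spec[of _ "cd C h"])

lemma comp_distrib_right:
  "arr f \<Longrightarrow> arr g \<Longrightarrow> arr h \<Longrightarrow> dm C g = dm C f \<Longrightarrow> cd C g = cd C f \<Longrightarrow> cd C h = dm C f \<Longrightarrow>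
   cmp C (pls C f g) h = pls C (cmp C f h) (cmp C g h)"
  using preadditive unfolding preadditive_def
  by (auto simp: in_hom_iff dest!: spec[of _ "dm C h"] spec[of _ "dm C f"] spec[of _ "cd C f"])

lemma add_idem_imp_zero:
  assumes "arr f" "pls C f f = f"
  shows "f = zro C (dm C f) (cd C f)"
  using add_right_cancel[of f "zro C (dm C f) (cd C f)" f] assms by simp

lemma comp_zero_right [simp]:
  assumes "arr h" "a \<in> obj C" "dm C h = b"
  shows "cmp C h (zro C a b) = zro C a (cd C h)"
proof -
  have b: "b \<in> obj C" using assms by auto
  have "cmp C h (zro C a b) = cmp C h (pls C (zro C a b) (zro C a b))"
    using assms b by simp
  also have "\<dots> = pls C (cmp C h (zro C a b)) (cmp C h (zro C a b))"
    by (rule comp_distrib_left) (use assms b in simp_all)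
  finally have "pls C (cmp C h (zro C a b)) (cmp C h (zro C a b)) = cmp C h (zro C a b)" by (rule sym)
  then show ?thesis using add_idem_imp_zero[of "cmp C h (zro C a b)"] assms b by simp
qed

lemma comp_zero_left [simp]:
  assumes "arr h" "c \<in> obj C" "cd C h = b"
  shows "cmp C (zro C b c) h = zro C (dm C h) c"
proof -
  have b: "b \<in> obj C" using assms by auto
  have "cmp C (zro C b c) h = cmp C (pls C (zro C b c) (zro C b c)) h"
    using assms b by simp
  also have "\<dots> = pls C (cmp C (zro C b c) h) (cmp C (zro C b c) h)"
    by (rule comp_distrib_right) (use assms b in simp_all)
  finally have "pls C (cmp C (zro C b c) h) (cmp C (zro C b c) h) = cmp C (zro C b c) h" by (rule sym)
  then show ?thesis using add_idem_imp_zero[of "cmp C (zro C b c) h"] assms b by simp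
qed

end

section \<open>The opposite category\<close>

definition opc :: "('o, 'm) precat \<Rightarrow> ('o, 'm) precat" where
  "opc C = \<lparr>obj = obj C, mor = mor C, dm = cd C, cd = dm C, cmp = (\<lambda>g f. cmp C f g),
     idt = idt C, pls = pls C, zro = (\<lambda>a b. zro C b a)\<rparr>"

lemma opc_simps [simp]:
  "obj (opc C) = obj C" "mor (opc C) = mor C" "dm (opc C) = cd C" "cd (opc C) = dm C"
  "cmp (opc C) g f = cmp C f g" "idt (opc C) = idt C" "pls (opc C) = pls C"
  "zro (opc C) a b = zro C b a"
  by (simp_all add: opc_def)

lemma opc_opc [simp]: "opc (opc C) = C"
  by (simp add: opc_def)

lemma hom_opc [simp]: "hom (opc C) a b = hom C b a"
  by (auto simp: hom_def)

lemma is_kernel_opc [simp]: "is_kernel (opc C) i d = is_cokernel C i d"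
  unfolding is_kernel_def is_cokernel_def by auto

lemma is_cokernel_opc [simp]: "is_cokernel (opc C) d i = is_kernel C d i"
  using is_kernel_opc[of "opc C" d i] by simp

lemma is_pushout_opc [simp]: "is_pushout (opc C) i t t' i' = is_pullback C i t i' t'"
proof
  assume po: "is_pushout (opc C) i t t' i'"
  then have "dm C t' = dm C i'" unfolding is_pushout_def by simp
  with po show "is_pullback C i t i' t'" unfolding is_pushout_def is_pullback_def by simp
next
  assume pb: "is_pullback C i t i' t'"
  then have "dm C t' = dm C i'" unfolding is_pullback_def by simp
  with pb show "is_pushout (opc C) i t t' i'" unfolding is_pushout_def is_pullback_def by simp
qed

lemma is_pullback_opc [simp]: "is_pullback (opc C) h t h' t' = is_pushout C h t t' h'"
  using is_pushout_opc[of "opc C" h t t' h'] by simp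

lemma iso_opc [simp]: "iso (opc C) f = iso C f"
  unfolding iso_def by auto

context preadditive_category
begin

lemma preadditive_category_opc: "preadditive_category (opc C)"
proof -
  have "category (opc C)"
    unfolding category_def
  proof (intro conjI ballI allI impI)
    fix a b c d f g h
    assume "f \<in> hom (opc C) a b" "g \<in> hom (opc C) b c" "h \<in> hom (opc C) c d"
    then show "cmp (opc C) h (cmp (opc C) g f) = cmp (opc C) (cmp (opc C) h g) f"
      by (auto simp: in_hom_iff comp_assoc)
  qed (auto simp: in_hom_iff)
  moreover have "\<exists>g\<in>hom (opc C) a b. pls (opc C) f g = zro (opc C) a b"
    if f: "f \<in> hom (opc C) a b" for a b f
  proof -
    obtain g where "arr g" "dm C g = dm C f" "cd C g = cd C f" "pls C f g = zro C (dm C f) (cd C f)"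
      using f add_inverse_exists[of f] by (auto simp: in_hom_iff)
    then show ?thesis using f by (auto simp: in_hom_iff)
  qed
  ultimately show ?thesis
    unfolding preadditive_category_def preadditive_def
    by (auto simp: in_hom_iff add_assoc comp_distrib_left comp_distrib_right intro: add_commute)
qed

lemma cokernel_universal:
  assumes "is_cokernel C d x" "X \<in> obj C" "t \<in> hom C (cd C x) X" "cmp C t x = zro C (dm C x) X"
  shows "\<exists>!w. w \<in> hom C (cd C d) X \<and> cmp C w d = t"
  using assms unfolding is_cokernel_def by blast

lemma cokernel_epi:
  assumes d: "is_cokernel C d x" and u: "arr u" "dm C u = cd C d" and v: "arr v" "dm C v = cd C d"
    and ud: "cmp C u d = cmp C v d"
  shows "u = v"
proof -
  have D: "arr d" "arr x" "cd C x = dm C d" "cmp C d x = zro C (dm C x) (cd C d)"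
    using d unfolding is_cokernel_def by blast+
  have cd_v: "cd C v = cd C u"
    using cd_comp[of d u] cd_comp[of d v] ud u v D by simp
  have "cmp C (cmp C u d) x = zro C (dm C x) (cd C u)"
    using D u by (simp add: comp_assoc[symmetric])
  moreover have "cmp C u d \<in> hom C (cd C x) (cd C u)"
    using D u by (simp add: in_hom_iff)
  ultimately have "\<exists>!w. w \<in> hom C (cd C d) (cd C u) \<and> cmp C w d = cmp C u d"
    using cokernel_universal[OF d] u by simp
  then show ?thesis
    using u v cd_v ud by (auto simp: in_hom_iff)
qed

lemma cokernel_factor:
  assumes d: "is_cokernel C d x" and t: "arr t" "dm C t = cd C x"
    and tx: "cmp C t x = zro C (dm C x) (cd C t)"
  obtains w where "arr w" "dm C w = cd C d" "cd C w = cd C t" "cmp C w d = t"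
proof -
  have "t \<in> hom C (cd C x) (cd C t)" using t by (simp add: in_hom_iff)
  then have "\<exists>!w. w \<in> hom C (cd C d) (cd C t) \<and> cmp C w d = t"
    using cokernel_universal[OF d] t tx by simp
  then show ?thesis using that by (auto simp: in_hom_iff)
qed

lemma pushout_universal:
  assumes "is_pushout C i t t' i'" "X \<in> obj C" "u \<in> hom C (cd C i) X" "v \<in> hom C (cd C t) X"
    "cmp C u i = cmp C v t"
  shows "\<exists>!w. w \<in> hom C (cd C t') X \<and> cmp C w t' = u \<and> cmp C w i' = v"
  using assms unfolding is_pushout_def by blast

lemma pushout_factor:
  assumes po: "is_pushout C i t t' i'" and u: "arr u" "dm C u = cd C i"
    and v: "arr v" "dm C v = cd C t" "cd C v = cd C u" and uv: "cmp C u i = cmp C v t"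
  obtains w where "arr w" "dm C w = cd C t'" "cd C w = cd C u" "cmp C w t' = u" "cmp C w i' = v"
proof -
  have "u \<in> hom C (cd C i) (cd C u)" "v \<in> hom C (cd C t) (cd C u)"
    using u v by (auto simp: in_hom_iff)
  then have "\<exists>!w. w \<in> hom C (cd C t') (cd C u) \<and> cmp C w t' = u \<and> cmp C w i' = v"
    using pushout_universal[OF po] u uv by simp
  then show ?thesis using that by (auto simp: in_hom_iff)
qed

lemma pushout_unique:
  assumes po: "is_pushout C i t t' i'" and w1: "arr w1" "dm C w1 = cd C t'"
    and w2: "arr w2" "dm C w2 = cd C t'"
    and w1t: "cmp C w1 t' = cmp C w2 t'" and w1i: "cmp C w1 i' = cmp C w2 i'"
  shows "w1 = w2"
proof -
  have P: "arr i" "arr t" "arr t'" "arr i'" "dm C t = dm C i" "dm C t' = cd C i" "dm C i' = cd C t"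
    "cd C t' = cd C i'" "cmp C t' i = cmp C i' t"
    using po unfolding is_pushout_def by blast+
  have cd_w2: "cd C w2 = cd C w1"
    using cd_comp[of t' w1] cd_comp[of t' w2] w1t w1 w2 P by simp
  let ?u = "cmp C w1 t'" and ?v = "cmp C w1 i'"
  have "cmp C ?u i = cmp C ?v t"
    using P w1 by (simp add: comp_assoc[symmetric])
  moreover have "?u \<in> hom C (cd C i) (cd C w1)" "?v \<in> hom C (cd C t) (cd C w1)"
    using P w1 by (auto simp: in_hom_iff)
  ultimately have "\<exists>!w. w \<in> hom C (cd C t') (cd C w1) \<and> cmp C w t' = ?u \<and> cmp C w i' = ?v"
    using pushout_universal[OF po] w1 by simp
  then show ?thesis
    using w1 w2 cd_w2 w1t w1i by (auto simp: in_hom_iff)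
qed

lemma kernel_mono:
  assumes "is_kernel C x d" "arr u" "cd C u = dm C x" "arr v" "cd C v = dm C x"
    "cmp C x u = cmp C x v"
  shows "u = v"
  using preadditive_category.cokernel_epi[OF preadditive_category_opc, of x d u v] assms by simp

lemma kernel_factor:
  assumes "is_kernel C x d" "arr t" "cd C t = dm C d" "cmp C d t = zro C (dm C t) (cd C d)"
  obtains w where "arr w" "cd C w = dm C x" "dm C w = dm C t" "cmp C x w = t"
  using preadditive_category.cokernel_factor[OF preadditive_category_opc, of x d t] assms that
  by (simp, blast)

lemma pullback_factor:
  assumes pb: "is_pullback C h t h' t'" and "arr u" "cd C u = dm C h" "arr v" "cd C v = dm C t"
    "dm C v = dm C u" "cmp C h u = cmp C t v"
  obtains w where "arr w" "cd C w = dm C h'" "dm C w = dm C u" "cmp C t' w = u" "cmp C h' w = v"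
proof -
  have "dm C h' = dm C t'" using pb unfolding is_pullback_def by blast
  then show ?thesis
    using preadditive_category.pushout_factor[OF preadditive_category_opc, of h t t' h' u v]
      assms that
    by (simp, blast)
qed

lemma pullback_unique:
  assumes pb: "is_pullback C h t h' t'" and "arr w1" "arr w2" "cd C w1 = dm C h'" "cd C w2 = dm C h'"
    "cmp C t' w1 = cmp C t' w2" "cmp C h' w1 = cmp C h' w2"
  shows "w1 = w2"
proof -
  have "dm C h' = dm C t'" using pb unfolding is_pullback_def by blast
  then show ?thesis
    using preadditive_category.pushout_unique[OF preadditive_category_opc, of h t t' h' w1 w2] assms
    by simp
qed

lemma is_kernelI:
  assumes "arr x" "arr d" "cd C x = dm C d" "cmp C d x = zro C (dm C x) (cd C d)"
    and factor: "\<And>t. arr t \<Longrightarrow> cd C t = dm C d \<Longrightarrow> cmp C d t = zro C (dm C t) (cd C d) \<Longrightarrow>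
      \<exists>w. arr w \<and> cd C w = dm C x \<and> cmp C x w = t"
    and mono: "\<And>u v. arr u \<Longrightarrow> arr v \<Longrightarrow> cd C u = dm C x \<Longrightarrow> cd C v = dm C x \<Longrightarrow>
      cmp C x u = cmp C x v \<Longrightarrow> u = v"
  shows "is_kernel C x d"
  unfolding is_kernel_def
proof (intro conjI ballI impI)
  fix X t assume "X \<in> obj C" "t \<in> hom C X (dm C d)" "cmp C d t = zro C X (cd C d)"
  then have t: "arr t" "dm C t = X" "cd C t = dm C d" "cmp C d t = zro C (dm C t) (cd C d)"
    by (simp_all add: in_hom_iff)
  then obtain w where w: "arr w" "cd C w = dm C x" "cmp C x w = t"
    using factor by blast
  show "\<exists>!w. w \<in> hom C X (dm C x) \<and> cmp C x w = t"
  proof (rule ex1I[of _ w])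
    show "w \<in> hom C X (dm C x) \<and> cmp C x w = t"
      using w t assms(1) dm_comp[of w x] by (simp add: in_hom_iff)
    show "w' = w" if "w' \<in> hom C X (dm C x) \<and> cmp C x w' = t" for w'
      by (rule mono) (use that w in \<open>simp_all add: in_hom_iff\<close>)
  qed
qed (use assms(1-4) in simp_all)

lemma is_cokernelI:
  assumes "arr x" "arr d" "cd C x = dm C d" "cmp C d x = zro C (dm C x) (cd C d)"
    and "\<And>t. arr t \<Longrightarrow> dm C t = cd C x \<Longrightarrow> cmp C t x = zro C (dm C x) (cd C t) \<Longrightarrow>
      \<exists>w. arr w \<and> dm C w = cd C d \<and> cmp C w d = t"
    and "\<And>u v. arr u \<Longrightarrow> arr v \<Longrightarrow> dm C u = cd C d \<Longrightarrow> dm C v = cd C d \<Longrightarrow>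
      cmp C u d = cmp C v d \<Longrightarrow> u = v"
  shows "is_cokernel C d x"
proof -
  have "is_kernel (opc C) d x"
  proof (rule preadditive_category.is_kernelI[OF preadditive_category_opc])
    fix t assume "t \<in> mor (opc C)" "cd (opc C) t = dm (opc C) x"
      "cmp (opc C) x t = zro (opc C) (dm (opc C) t) (cd (opc C) x)"
    then show "\<exists>w. w \<in> mor (opc C) \<and> cd (opc C) w = dm (opc C) d \<and> cmp (opc C) d w = t"
      using assms(5) by simp
  next
    fix u v assume "u \<in> mor (opc C)" "v \<in> mor (opc C)" "cd (opc C) u = dm (opc C) d"
      "cd (opc C) v = dm (opc C) d" "cmp (opc C) d u = cmp (opc C) d v"
    then show "u = v" using assms(6) by simp
  qed (use assms(1-4) in simp_all)
  then show ?thesis by simp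
qed

lemma is_pullbackI:
  assumes "arr h" "arr t" "arr h'" "arr t'" "cd C t = cd C h" "cd C h' = dm C t" "cd C t' = dm C h"
    "dm C h' = dm C t'" "cmp C h t' = cmp C t h'"
    and factor: "\<And>u v. arr u \<Longrightarrow> arr v \<Longrightarrow> cd C u = dm C h \<Longrightarrow> cd C v = dm C t \<Longrightarrow>
      dm C v = dm C u \<Longrightarrow> cmp C h u = cmp C t v \<Longrightarrow>
      \<exists>w. arr w \<and> cd C w = dm C h' \<and> cmp C t' w = u \<and> cmp C h' w = v"
    and mono: "\<And>w w'. arr w \<Longrightarrow> arr w' \<Longrightarrow> cd C w = dm C h' \<Longrightarrow> cd C w' = dm C h' \<Longrightarrow>
      cmp C t' w = cmp C t' w' \<Longrightarrow> cmp C h' w = cmp C h' w' \<Longrightarrow> w = w'"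
  shows "is_pullback C h t h' t'"
  unfolding is_pullback_def
proof (intro conjI ballI impI)
  fix X u v assume "X \<in> obj C" "u \<in> hom C X (dm C h)" "v \<in> hom C X (dm C t)"
    and uv: "cmp C h u = cmp C t v"
  then have uv': "arr u" "dm C u = X" "cd C u = dm C h" "arr v" "dm C v = X" "cd C v = dm C t"
    by (simp_all add: in_hom_iff)
  then have "dm C v = dm C u" by simp
  then obtain w where w: "arr w" "cd C w = dm C h'" "cmp C t' w = u" "cmp C h' w = v"
    using factor[OF uv'(1,4,3,6) _ uv] by blast
  show "\<exists>!w. w \<in> hom C X (dm C h') \<and> cmp C t' w = u \<and> cmp C h' w = v"
  proof (rule ex1I[of _ w])
    show "w \<in> hom C X (dm C h') \<and> cmp C t' w = u \<and> cmp C h' w = v"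
      using w uv' assms(3,8) dm_comp[of w h'] by (simp add: in_hom_iff)
    show "w' = w" if "w' \<in> hom C X (dm C h') \<and> cmp C t' w' = u \<and> cmp C h' w' = v" for w'
      by (rule mono) (use that w in \<open>simp_all add: in_hom_iff\<close>)
  qed
qed (use assms(1-9) in simp_all)

lemma iso_intro:
  assumes "arr f" "arr g" "dm C g = cd C f" "cd C g = dm C f"
    "cmp C g f = idt C (dm C f)" "cmp C f g = idt C (cd C f)"
  shows "iso C f"
  unfolding iso_def using assms by (auto simp: in_hom_iff)

lemma isoE:
  assumes "iso C f"
  obtains g where "arr f" "arr g" "dm C g = cd C f" "cd C g = dm C f" "iso C g"
    "cmp C g f = idt C (dm C f)" "cmp C f g = idt C (cd C f)"
proof -
  obtain g where g: "arr f" "arr g" "dm C g = cd C f" "cd C g = dm C f"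
    "cmp C g f = idt C (dm C f)" "cmp C f g = idt C (cd C f)"
    using assms unfolding iso_def by (auto simp: in_hom_iff)
  moreover have "iso C g" using g by (intro iso_intro[of g f]) simp_all
  ultimately show ?thesis using that by blast
qed

lemma iso_id: "a \<in> obj C \<Longrightarrow> iso C (idt C a)"
  by (rule iso_intro[of _ "idt C a"]) simp_all

lemma comp_inverse_square:
  assumes "arr x" "arr y" "arr u" "arr v" "arr u'" "arr v'"
    and "cd C u = dm C x" "cd C y = dm C v" "dm C u' = cd C u" "cd C u' = dm C u"
    and "dm C v' = cd C v" "cd C v' = dm C v"
    and "cmp C u u' = idt C (cd C u)" "cmp C v' v = idt C (dm C v)"
    and xu: "cmp C x u = cmp C v y"
  shows "cmp C v' x = cmp C y u'"
proof -
  note facts = assms(1-12)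
  have cd_x: "cd C x = cd C v" and dm_y: "dm C y = dm C u"
    using cd_comp[of u x] cd_comp[of y v] dm_comp[of u x] dm_comp[of y v] xu facts by simp_all
  have "cmp C v' x = cmp C (cmp C v' x) (cmp C u u')"
    using assms(13) facts cd_x by simp
  also have "\<dots> = cmp C (cmp C v' (cmp C x u)) u'"
    using facts cd_x by (simp add: comp_assoc)
  also have "\<dots> = cmp C (cmp C v' (cmp C v y)) u'"
    by (simp only: xu)
  also have "\<dots> = cmp C (cmp C (cmp C v' v) y) u'"
    using facts by (simp add: comp_assoc)
  also have "\<dots> = cmp C y u'"
    using assms(14) facts dm_y by simp
  finally show ?thesis .
qed

lemma cokernels_iso:
  assumes d: "is_cokernel C d x" and d': "is_cokernel C d' x"
  obtains g where "arr g" "iso C g" "dm C g = cd C d" "cd C g = cd C d'" "cmp C g d = d'"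
proof -
  have D: "arr x" "arr d" "cd C x = dm C d" "cmp C d x = zro C (dm C x) (cd C d)"
    using d unfolding is_cokernel_def by blast+
  have D': "arr d'" "cd C x = dm C d'" "cmp C d' x = zro C (dm C x) (cd C d')"
    using d' unfolding is_cokernel_def by blast+
  obtain g where g: "arr g" "dm C g = cd C d" "cd C g = cd C d'" "cmp C g d = d'"
    using cokernel_factor[OF d D'(1) D'(2)[symmetric] D'(3)] by metis
  obtain g' where g': "arr g'" "dm C g' = cd C d'" "cd C g' = cd C d" "cmp C g' d' = d"
    using cokernel_factor[OF d' D(2) D(3)[symmetric] D(4)] by metis
  have "cmp C g' g = idt C (cd C d)"
    by (rule cokernel_epi[OF d]) (use D g g' in \<open>simp_all add: comp_assoc[symmetric]\<close>)
  moreover have "cmp C g g' = idt C (cd C d')"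
    by (rule cokernel_epi[OF d']) (use D D' g g' in \<open>simp_all add: comp_assoc[symmetric]\<close>)
  ultimately have "iso C g"
    using g g' by (intro iso_intro[of g g']) simp_all
  then show ?thesis using that g by blast
qed

lemma pullbacks_iso:
  assumes pb1: "is_pullback C h t h1 t1" and pb2: "is_pullback C h t h2 t2"
  obtains \<theta> where "iso C \<theta>" "dm C \<theta> = dm C h1" "cd C \<theta> = dm C h2" "cmp C h2 \<theta> = h1"
proof -
  have P1: "arr h" "arr t" "arr h1" "arr t1" "cd C t = cd C h" "cd C h1 = dm C t"
    "cd C t1 = dm C h" "dm C h1 = dm C t1" "cmp C h t1 = cmp C t h1"
    using pb1 unfolding is_pullback_def by blast+
  have P2: "arr h2" "arr t2" "cd C h2 = dm C t" "cd C t2 = dm C h" "dm C h2 = dm C t2"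
    "cmp C h t2 = cmp C t h2"
    using pb2 unfolding is_pullback_def by blast+
  obtain \<theta> where \<theta>: "arr \<theta>" "cd C \<theta> = dm C h2" "dm C \<theta> = dm C t1"
    "cmp C t2 \<theta> = t1" "cmp C h2 \<theta> = h1"
    using pullback_factor[OF pb2 P1(4,7,3,6) P1(8,9)] by metis
  obtain \<theta>' where \<theta>': "arr \<theta>'" "cd C \<theta>' = dm C h1" "dm C \<theta>' = dm C t2"
    "cmp C t1 \<theta>' = t2" "cmp C h1 \<theta>' = h2"
    using pullback_factor[OF pb1 P2(2,4,1,3) P2(5,6)] by metis
  have "cmp C \<theta>' \<theta> = idt C (dm C h1)"
  proof (rule pullback_unique[OF pb1])
    show "cmp C t1 (cmp C \<theta>' \<theta>) = cmp C t1 (idt C (dm C h1))"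
      using P1 P2 \<theta> \<theta>' by (simp add: comp_assoc)
    show "cmp C h1 (cmp C \<theta>' \<theta>) = cmp C h1 (idt C (dm C h1))"
      using P1 P2 \<theta> \<theta>' by (simp add: comp_assoc)
  qed (use P1 P2 \<theta> \<theta>' in simp_all)
  moreover have "cmp C \<theta> \<theta>' = idt C (dm C h2)"
  proof (rule pullback_unique[OF pb2])
    show "cmp C t2 (cmp C \<theta> \<theta>') = cmp C t2 (idt C (dm C h2))"
      using P1 P2 \<theta> \<theta>' by (simp add: comp_assoc)
    show "cmp C h2 (cmp C \<theta> \<theta>') = cmp C h2 (idt C (dm C h2))"
      using P1 P2 \<theta> \<theta>' by (simp add: comp_assoc)
  qed (use P1 P2 \<theta> \<theta>' in simp_all)
  ultimately have "iso C \<theta>"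
    using P1 P2 \<theta> \<theta>' by (intro iso_intro[of \<theta> \<theta>']) simp_all
  then show ?thesis
    using that \<theta> P1 by simp
qed

lemma pushout_cokernel:
  assumes po: "is_pushout C m i t' i'" and p: "is_cokernel C p m"
    and \<rho>: "arr \<rho>" "dm C \<rho> = cd C t'" "cmp C \<rho> t' = p"
      "cmp C \<rho> i' = zro C (dm C i') (cd C \<rho>)"
  shows "is_cokernel C \<rho> i'"
proof -
  have P: "arr m" "arr i" "arr t'" "arr i'" "dm C i = dm C m" "dm C t' = cd C m"
    "dm C i' = cd C i" "cd C t' = cd C i'" "cmp C t' m = cmp C i' i"
    using po unfolding is_pushout_def by blast+
  have p_m: "arr p" "dm C p = cd C m" "cd C p = cd C \<rho>"
    using p \<rho> P cd_comp[of t' \<rho>] unfolding is_cokernel_def by auto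
  show ?thesis
  proof (rule is_cokernelI)
    show "arr i'" "arr \<rho>" "cd C i' = dm C \<rho>" "cmp C \<rho> i' = zro C (dm C i') (cd C \<rho>)"
      using P \<rho> by simp_all
    fix s assume s: "arr s" "dm C s = cd C i'" and s_i': "cmp C s i' = zro C (dm C i') (cd C s)"
    have "cmp C (cmp C s t') m = cmp C (cmp C s i') i"
      using P s by (simp add: comp_assoc[symmetric])
    also have "\<dots> = zro C (dm C m) (cd C (cmp C s t'))"
      using s_i' P s by simp
    finally obtain g where g: "arr g" "dm C g = cd C p" "cmp C g p = cmp C s t'"
      using cokernel_factor[OF p, of "cmp C s t'"] P s by auto
    have "cmp C g \<rho> = s"
    proof (rule pushout_unique[OF po])
      show "cmp C (cmp C g \<rho>) t' = cmp C s t'"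
        using g \<rho> P p_m by (simp add: comp_assoc[symmetric])
      show "cmp C (cmp C g \<rho>) i' = cmp C s i'"
        using g \<rho> P s s_i' p_m cd_comp[of p g] by (simp add: comp_assoc[symmetric])
    qed (use g \<rho> P s p_m in simp_all)
    then show "\<exists>w. arr w \<and> dm C w = cd C \<rho> \<and> cmp C w \<rho> = s"
      using g p_m by auto
  next
    fix u v assume uv: "arr u" "arr v" "dm C u = cd C \<rho>" "dm C v = cd C \<rho>"
      and u\<rho>: "cmp C u \<rho> = cmp C v \<rho>"
    have "cmp C u p = cmp C (cmp C u \<rho>) t'" "cmp C v p = cmp C (cmp C v \<rho>) t'"
      using uv \<rho> P by (simp_all add: comp_assoc[symmetric])
    then have "cmp C u p = cmp C v p"
      using u\<rho> by simp
    then show "u = v"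
      using cokernel_epi[OF p, of u v] uv p_m by simp
  qed
qed

lemma pullback_kernel:
  assumes pb: "is_pullback C p b k j" and m: "is_kernel C (cmp C j i) p"
    and i: "arr i" "cd C i = dm C j" and k_i: "cmp C k i = zro C (dm C i) (cd C k)"
  shows "is_kernel C i k"
proof -
  have P: "arr p" "arr b" "arr k" "arr j" "cd C b = cd C p" "cd C k = dm C b" "cd C j = dm C p"
    "dm C k = dm C j" "cmp C p j = cmp C b k"
    using pb unfolding is_pullback_def by blast+
  show ?thesis
  proof (rule is_kernelI)
    show "arr i" "arr k" "cd C i = dm C k" "cmp C k i = zro C (dm C i) (cd C k)"
      using P i k_i by simp_all
    fix s assume s: "arr s" "cd C s = dm C k" and k_s: "cmp C k s = zro C (dm C s) (cd C k)"
    have "cmp C p (cmp C j s) = cmp C b (cmp C k s)"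
      using P s by (simp add: comp_assoc)
    also have "\<dots> = zro C (dm C (cmp C j s)) (cd C p)"
      using P s k_s by simp
    finally obtain u where u: "arr u" "cd C u = dm C i" "cmp C (cmp C j i) u = cmp C j s"
      using kernel_factor[OF m, of "cmp C j s"] P s i by auto
    have "cmp C i u = s"
    proof (rule pullback_unique[OF pb])
      show "cmp C j (cmp C i u) = cmp C j s"
        using u P i by (simp add: comp_assoc)
      show "cmp C k (cmp C i u) = cmp C k s"
        using u P i s k_i k_s dm_comp[of u "cmp C j i"] dm_comp[of s j] by (simp add: comp_assoc)
    qed (use u P i s in simp_all)
    then show "\<exists>w. arr w \<and> cd C w = dm C i \<and> cmp C i w = s"
      using u by blast
  next
    fix u v assume "arr u" "arr v" "cd C u = dm C i" "cd C v = dm C i" "cmp C i u = cmp C i v"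
    then show "u = v"
      using kernel_mono[OF m, of u v] P i by (simp add: comp_assoc[symmetric])
  qed
qed

lemma biproductD:
  assumes "is_biproduct C X Y S \<iota>1 \<iota>2 \<pi>1 \<pi>2"
  shows "arr \<iota>1" "dm C \<iota>1 = X" "cd C \<iota>1 = S" "arr \<iota>2" "dm C \<iota>2 = Y" "cd C \<iota>2 = S"
    "arr \<pi>1" "dm C \<pi>1 = S" "cd C \<pi>1 = X" "arr \<pi>2" "dm C \<pi>2 = S" "cd C \<pi>2 = Y"
    "cmp C \<pi>1 \<iota>1 = idt C X" "cmp C \<pi>2 \<iota>2 = idt C Y"
    "cmp C \<pi>1 \<iota>2 = zro C Y X" "cmp C \<pi>2 \<iota>1 = zro C X Y"
    "pls C (cmp C \<iota>1 \<pi>1) (cmp C \<iota>2 \<pi>2) = idt C S"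
  using assms unfolding is_biproduct_def in_hom_iff by blast+

lemma biproduct_decompose:
  assumes bp: "is_biproduct C X Y S \<iota>1 \<iota>2 \<pi>1 \<pi>2" and f: "arr f" "cd C f = S"
  shows "pls C (cmp C \<iota>1 (cmp C \<pi>1 f)) (cmp C \<iota>2 (cmp C \<pi>2 f)) = f"
proof -
  note B = biproductD[OF bp]
  have "cmp C (pls C (cmp C \<iota>1 \<pi>1) (cmp C \<iota>2 \<pi>2)) f
      = pls C (cmp C (cmp C \<iota>1 \<pi>1) f) (cmp C (cmp C \<iota>2 \<pi>2) f)"
    by (rule comp_distrib_right) (use B f in simp_all)
  then show ?thesis
    using B f by (simp add: comp_assoc)
qed

text \<open>A kernel of \<open>(a, -b) : X \<oplus> Y \<rightarrow> Q\<close> is a pullback of \<open>a\<close> and \<open>b\<close>.\<close>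
lemma biproduct_kernel_pullback:
  assumes bp: "is_biproduct C X Y S \<iota>1 \<iota>2 \<pi>1 \<pi>2" and e: "is_kernel C e \<rho>"
    and \<rho>: "dm C \<rho> = S" and b: "arr b" "dm C b = Y" "cd C b = cd C \<rho>"
    and \<rho>_b: "pls C (cmp C \<rho> \<iota>2) b = zro C Y (cd C \<rho>)"
  shows "is_pullback C (cmp C \<rho> \<iota>1) b (cmp C \<pi>2 e) (cmp C \<pi>1 e)"
proof -
  note B = biproductD[OF bp]
  have XY: "X \<in> obj C" "Y \<in> obj C"
    using B(1,2,4,5) dm_obj by metis+
  have E: "arr e" "arr \<rho>" "cd C e = S" "cmp C \<rho> e = zro C (dm C e) (cd C \<rho>)"
    using e \<rho> unfolding is_kernel_def by auto
  note F = B XY E \<rho> b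
  have key: "pls C (cmp C \<rho> (pls C (cmp C \<iota>1 u) (cmp C \<iota>2 v))) (cmp C b v) = cmp C (cmp C \<rho> \<iota>1) u"
    if u: "arr u" "cd C u = X" and v: "arr v" "cd C v = Y" "dm C v = dm C u" for u v
  proof -
    have "pls C (cmp C \<rho> (pls C (cmp C \<iota>1 u) (cmp C \<iota>2 v))) (cmp C b v)
        = pls C (cmp C (cmp C \<rho> \<iota>1) u) (cmp C (pls C (cmp C \<rho> \<iota>2) b) v)"
      using F u v by (simp add: comp_distrib_left comp_distrib_right comp_assoc add_assoc)
    then show ?thesis
      using F u v \<rho>_b by simp
  qed
  show ?thesis
  proof (rule is_pullbackI)
    show "arr (cmp C \<rho> \<iota>1)" "arr b" "arr (cmp C \<pi>2 e)" "arr (cmp C \<pi>1 e)"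
      "cd C b = cd C (cmp C \<rho> \<iota>1)" "cd C (cmp C \<pi>2 e) = dm C b"
      "cd C (cmp C \<pi>1 e) = dm C (cmp C \<rho> \<iota>1)" "dm C (cmp C \<pi>2 e) = dm C (cmp C \<pi>1 e)"
      using F by simp_all
    show "cmp C (cmp C \<rho> \<iota>1) (cmp C \<pi>1 e) = cmp C b (cmp C \<pi>2 e)"
      using key[of "cmp C \<pi>1 e" "cmp C \<pi>2 e"] biproduct_decompose[OF bp E(1,3)] F by simp
  next
    fix u v assume u: "arr u" "cd C u = dm C (cmp C \<rho> \<iota>1)" and v: "arr v" "cd C v = dm C b"
      "dm C v = dm C u" and uv: "cmp C (cmp C \<rho> \<iota>1) u = cmp C b v"
    define s where "s = pls C (cmp C \<iota>1 u) (cmp C \<iota>2 v)"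
    have S: "arr s" "dm C s = dm C u" "cd C s = S"
      using F u v by (simp_all add: s_def)
    have "pls C (cmp C \<rho> s) (cmp C b v) = pls C (zro C (dm C u) (cd C \<rho>)) (cmp C b v)"
      using key[of u v] u v uv F by (simp add: s_def)
    then have "cmp C \<rho> s = zro C (dm C s) (cd C \<rho>)"
      unfolding S(2) by (rule add_right_cancel[rotated -1]) (use F u v S in simp_all)
    then obtain w where w: "arr w" "cd C w = dm C e" "cmp C e w = s"
      using kernel_factor[OF e S(1)] S F by metis
    have "cmp C \<pi>1 s = u" "cmp C \<pi>2 s = v"
      using F u v by (simp_all add: s_def comp_distrib_left comp_assoc)
    then show "\<exists>w. arr w \<and> cd C w = dm C (cmp C \<pi>2 e) \<and> cmp C (cmp C \<pi>1 e) w = u \<and>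
        cmp C (cmp C \<pi>2 e) w = v"
      using w F by (auto simp: comp_assoc[symmetric])
  next
    fix w w' assume w: "arr w" "arr w'" "cd C w = dm C (cmp C \<pi>2 e)" "cd C w' = dm C (cmp C \<pi>2 e)"
      and \<pi>1_w: "cmp C (cmp C \<pi>1 e) w = cmp C (cmp C \<pi>1 e) w'"
      and \<pi>2_w: "cmp C (cmp C \<pi>2 e) w = cmp C (cmp C \<pi>2 e) w'"
    have "cmp C e w = cmp C e w'"
      using biproduct_decompose[OF bp, of "cmp C e w"] biproduct_decompose[OF bp, of "cmp C e w'"]
        \<pi>1_w \<pi>2_w w F by (simp add: comp_assoc)
    then show "w = w'"
      using kernel_mono[OF e, of w w'] w F by simp
  qed
qed

section \<open>The pushout of a composite along its first factor\<close>

lemma pushout_comp_complement: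
  assumes po: "is_pushout C (cmp C j i) i t' i'" and k: "is_cokernel C k i"
    and j: "arr j" "dm C j = cd C i"
  obtains \<delta> where "arr \<delta>" "dm C \<delta> = cd C k" "cd C \<delta> = cd C t'"
    "pls C (cmp C \<delta> k) (cmp C t' j) = i'"
proof -
  have K: "arr i" "arr k" "cd C i = dm C k" "cmp C k i = zro C (dm C i) (cd C k)"
    using k unfolding is_cokernel_def by blast+
  have P: "arr t'" "arr i'" "dm C t' = cd C (cmp C j i)" "dm C i' = cd C i" "cd C t' = cd C i'"
    "cmp C t' (cmp C j i) = cmp C i' i"
    using po unfolding is_pushout_def by blast+
  then have "dm C t' = cd C j" using j K by simp
  obtain j' where j': "arr j'" "dm C j' = dm C j" "cd C j' = cd C j"
    and j_j': "pls C j j' = zro C (dm C j) (cd C j)"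
    using add_inverse_exists[OF j(1)] .
  note F = K P(1,2,4-6) \<open>dm C t' = cd C j\<close> j j'
  \<comment> \<open>\<open>\<delta>\<close> is induced by \<open>i' - t' \<circ> j\<close>, which vanishes on \<open>i\<close>.\<close>
  let ?d = "pls C i' (cmp C t' j')"
  have "cmp C ?d i = pls C (cmp C i' i) (cmp C (cmp C t' j') i)"
    by (rule comp_distrib_right) (use F in simp_all)
  also have "\<dots> = cmp C t' (cmp C (pls C j j') i)"
    using F by (simp add: comp_assoc comp_distrib_left comp_distrib_right)
  also have "\<dots> = zro C (dm C i) (cd C ?d)"
    using F j_j' by simp
  finally obtain \<delta> where \<delta>: "arr \<delta>" "dm C \<delta> = cd C k" "cd C \<delta> = cd C t'" "cmp C \<delta> k = ?d"
    using cokernel_factor[OF k, of ?d] F by auto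
  have "pls C ?d (cmp C t' j) = pls C i' (cmp C t' (pls C j' j))"
    using F by (simp add: add_assoc comp_distrib_left)
  also have "\<dots> = i'"
    using F j_j' add_commute[of j' j] by simp
  finally show ?thesis
    using that \<delta> by simp
qed

lemma pushout_comp_biproduct:
  assumes po: "is_pushout C (cmp C j i) i t' i'" and k: "is_cokernel C k i"
    and j: "arr j" "dm C j = cd C i"
  obtains \<delta> \<pi> \<sigma> where "is_biproduct C (cd C j) (cd C k) (cd C t') t' \<delta> \<pi> \<sigma>"
    "cmp C \<pi> i' = j" "cmp C \<sigma> i' = k" "pls C (cmp C \<delta> k) (cmp C t' j) = i'"
proof -
  have K: "arr i" "arr k" "cd C i = dm C k" "cmp C k i = zro C (dm C i) (cd C k)"
    using k unfolding is_cokernel_def by blast+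
  have P: "arr t'" "arr i'" "dm C t' = cd C (cmp C j i)" "dm C i' = cd C i" "cd C t' = cd C i'"
    using po unfolding is_pushout_def by blast+
  then have "dm C t' = cd C j" using j K by simp
  note F = K P(1,2,4,5) \<open>dm C t' = cd C j\<close> j
  obtain \<pi> where \<pi>: "arr \<pi>" "dm C \<pi> = cd C t'" "cd C \<pi> = cd C j"
    "cmp C \<pi> t' = idt C (cd C j)" "cmp C \<pi> i' = j"
  proof (rule pushout_factor[OF po, of "idt C (cd C j)" j])
    fix w assume "arr w" "dm C w = cd C t'" "cd C w = cd C (idt C (cd C j))"
      "cmp C w t' = idt C (cd C j)" "cmp C w i' = j"
    then show thesis using that F by simp
  qed (use F in simp_all)
  obtain \<sigma> where \<sigma>: "arr \<sigma>" "dm C \<sigma> = cd C t'" "cd C \<sigma> = cd C k"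
    "cmp C \<sigma> t' = zro C (cd C j) (cd C k)" "cmp C \<sigma> i' = k"
  proof (rule pushout_factor[OF po, of "zro C (cd C j) (cd C k)" k])
    fix w assume "arr w" "dm C w = cd C t'" "cd C w = cd C (zro C (cd C j) (cd C k))"
      "cmp C w t' = zro C (cd C j) (cd C k)" "cmp C w i' = k"
    then show thesis using that F by simp
  qed (use F in simp_all)
  obtain \<delta> where \<delta>: "arr \<delta>" "dm C \<delta> = cd C k" "cd C \<delta> = cd C t'"
    and i'_eq: "pls C (cmp C \<delta> k) (cmp C t' j) = i'"
    using pushout_comp_complement[OF po k j] .
  note F = F \<pi> \<sigma> \<delta>
  have expand: "pls C (cmp C (cmp C f \<delta>) k) (cmp C (cmp C f t') j) = cmp C f i'"
    if "arr f" "dm C f = cd C t'" for f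
  proof -
    have "cmp C f (pls C (cmp C \<delta> k) (cmp C t' j))
        = pls C (cmp C (cmp C f \<delta>) k) (cmp C (cmp C f t') j)"
      using F that by (simp add: comp_distrib_left comp_assoc)
    then show ?thesis using i'_eq by simp
  qed
  have "cmp C (cmp C \<sigma> \<delta>) k = cmp C (idt C (cd C k)) k"
    using expand[OF \<sigma>(1,2)] F by simp
  then have \<sigma>_\<delta>: "cmp C \<sigma> \<delta> = idt C (cd C k)"
    by (rule cokernel_epi[OF k, rotated -1]) (use F in simp_all)
  have "pls C (cmp C (cmp C \<pi> \<delta>) k) j = pls C (cmp C (zro C (cd C k) (cd C j)) k) j"
    using expand[OF \<pi>(1,2)] F by simp
  then have "cmp C (cmp C \<pi> \<delta>) k = cmp C (zro C (cd C k) (cd C j)) k"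
    by (rule add_right_cancel[rotated -1]) (use F in simp_all)
  then have \<pi>_\<delta>: "cmp C \<pi> \<delta> = zro C (cd C k) (cd C j)"
    by (rule cokernel_epi[OF k, rotated -1]) (use F in simp_all)
  have sum: "pls C (cmp C t' \<pi>) (cmp C \<delta> \<sigma>) = idt C (cd C t')"
  proof (rule pushout_unique[OF po])
    show "cmp C (pls C (cmp C t' \<pi>) (cmp C \<delta> \<sigma>)) t' = cmp C (idt C (cd C t')) t'"
      using F by (simp add: comp_distrib_right comp_assoc[symmetric])
    have "cmp C (pls C (cmp C t' \<pi>) (cmp C \<delta> \<sigma>)) i' = pls C (cmp C t' j) (cmp C \<delta> k)"
      using F by (simp add: comp_distrib_right comp_assoc[symmetric])
    also have "\<dots> = cmp C (idt C (cd C t')) i'"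
      using i'_eq add_commute[of "cmp C t' j" "cmp C \<delta> k"] F by simp
    finally show "cmp C (pls C (cmp C t' \<pi>) (cmp C \<delta> \<sigma>)) i' = cmp C (idt C (cd C t')) i'" .
  qed (use F in simp_all)
  have "is_biproduct C (cd C j) (cd C k) (cd C t') t' \<delta> \<pi> \<sigma>"
    unfolding is_biproduct_def using F \<sigma>_\<delta> \<pi>_\<delta> sum by (simp add: in_hom_iff)
  from that[OF this \<pi>(5) \<sigma>(5) i'_eq] show ?thesis .
qed

lemma pushout_comp_pullback:
  assumes po: "is_pushout C (cmp C j i) i t' i'" and k: "is_cokernel C k i"
    and j: "arr j" "dm C j = cd C i" and p: "is_cokernel C p (cmp C j i)"
    and i'_kernel: "\<And>\<rho>. is_cokernel C \<rho> i' \<Longrightarrow> is_kernel C i' \<rho>"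
  obtains b where "is_pullback C p b k j"
proof -
  have K: "arr i" "arr k" "dm C k = cd C i" "cmp C k i = zro C (dm C i) (cd C k)"
    using k unfolding is_cokernel_def by auto
  have M: "arr p" "dm C p = cd C j" "cmp C p (cmp C j i) = zro C (dm C i) (cd C p)"
    using p K j unfolding is_cokernel_def by auto
  have P: "arr t'" "arr i'" "dm C t' = cd C (cmp C j i)" "dm C i' = cd C i" "cd C t' = cd C i'"
    using po unfolding is_pushout_def by blast+
  obtain \<delta> \<pi> \<sigma> where bp: "is_biproduct C (cd C j) (cd C k) (cd C t') t' \<delta> \<pi> \<sigma>"
    and "cmp C \<pi> i' = j" "cmp C \<sigma> i' = k" and i'_eq: "pls C (cmp C \<delta> k) (cmp C t' j) = i'"
    using pushout_comp_biproduct[OF po k j] .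
  obtain \<rho> where \<rho>: "arr \<rho>" "dm C \<rho> = cd C t'" "cd C \<rho> = cd C p" "cmp C \<rho> t' = p"
    "cmp C \<rho> i' = zro C (cd C i) (cd C p)"
  proof (rule pushout_factor[OF po, of p "zro C (cd C i) (cd C p)"])
    fix w assume "arr w" "dm C w = cd C t'" "cd C w = cd C p" "cmp C w t' = p"
      "cmp C w i' = zro C (cd C i) (cd C p)"
    then show thesis by (rule that)
  qed (use K j M in simp_all)
  have "is_cokernel C \<rho> i'"
    by (rule pushout_cokernel[OF po p]) (use \<rho> P in simp_all)
  then have i'_\<rho>: "is_kernel C i' \<rho>" by (rule i'_kernel)
  have "cmp C (cmp C p j) i = zro C (dm C i) (cd C (cmp C p j))"
    using M K j by (simp add: comp_assoc)
  then obtain b where b: "arr b" "dm C b = cd C k" "cd C b = cd C p" "cmp C b k = cmp C p j"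
    using cokernel_factor[OF k, of "cmp C p j"] M K j by auto
  note B = biproductD[OF bp]
  \<comment> \<open>Thus \<open>\<rho> = (p, -b)\<close> on \<open>cd j \<oplus> coker i\<close>.\<close>
  have "cmp C (pls C (cmp C \<rho> \<delta>) b) k = cmp C \<rho> (pls C (cmp C \<delta> k) (cmp C t' j))"
    using B P \<rho> b K j by (simp add: comp_distrib_left comp_distrib_right comp_assoc)
  also have "\<dots> = cmp C (zro C (cd C k) (cd C \<rho>)) k"
    using i'_eq \<rho> K P M by simp
  finally have "pls C (cmp C \<rho> \<delta>) b = zro C (cd C k) (cd C \<rho>)"
    by (rule cokernel_epi[OF k, rotated -1]) (use B \<rho> b K M in simp_all)
  then have "is_pullback C p b k j"
    using biproduct_kernel_pullback[OF bp i'_\<rho> \<rho>(2) b(1,2)] b \<rho> \<open>cmp C \<pi> i' = j\<close>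
      \<open>cmp C \<sigma> i' = k\<close> by simp
  then show ?thesis by (rule that)
qed

end

section \<open>Weakly exact structures\<close>

locale weakly_exact_core = preadditive_category C for C :: "('o, 'm) precat" +
  fixes W :: "('m \<times> 'm) set"
  assumes kc_pair_W: "(i, d) \<in> W \<Longrightarrow> kc_pair C i d"
    and iso_closed: "(i, d) \<in> W \<Longrightarrow> arr i' \<Longrightarrow> arr d' \<Longrightarrow> cd C i' = dm C d' \<Longrightarrow>
        \<alpha> \<in> hom C (dm C i) (dm C i') \<Longrightarrow> \<beta> \<in> hom C (cd C i) (cd C i') \<Longrightarrow>
        \<gamma> \<in> hom C (cd C d) (cd C d') \<Longrightarrow> iso C \<alpha> \<Longrightarrow> iso C \<beta> \<Longrightarrow> iso C \<gamma> \<Longrightarrow>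
        cmp C \<beta> i = cmp C i' \<alpha> \<Longrightarrow> cmp C \<gamma> d = cmp C d' \<beta> \<Longrightarrow> (i', d') \<in> W"
    and pushout_adm_monic: "adm_monic W i \<Longrightarrow> arr t \<Longrightarrow> dm C t = dm C i \<Longrightarrow>
        \<exists>t' i'. is_pushout C i t t' i' \<and> adm_monic W i'"
    and pullback_adm_epic: "adm_epic W h \<Longrightarrow> arr t \<Longrightarrow> cd C t = cd C h \<Longrightarrow>
        \<exists>h' t'. is_pullback C h t h' t' \<and> adm_epic W h'"

lemma weakly_exact_core_if_weakly_exact:
  assumes "preadditive C" "weakly_exact C W"
  shows "weakly_exact_core C W"
proof -
  note W = assms(2)[unfolded weakly_exact_def]
  show ?thesis
  proof (unfold_locales)
    show "preadditive C" by (rule assms(1))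
    show "kc_pair C i d" if "(i, d) \<in> W" for i d
      using W[THEN conjunct1] that by blast
  next
    show "(i', d') \<in> W"
      if "(i, d) \<in> W" "i' \<in> mor C" "d' \<in> mor C" "cd C i' = dm C d'" "\<alpha> \<in> hom C (dm C i) (dm C i')"
        "\<beta> \<in> hom C (cd C i) (cd C i')" "\<gamma> \<in> hom C (cd C d) (cd C d')" "iso C \<alpha>" "iso C \<beta>"
        "iso C \<gamma>" "cmp C \<beta> i = cmp C i' \<alpha>" "cmp C \<gamma> d = cmp C d' \<beta>"
      for i d i' d' \<alpha> \<beta> \<gamma>
      using W[THEN conjunct2, THEN conjunct1] that by blast
  next
    show "\<exists>t' i'. is_pushout C i t t' i' \<and> adm_monic W i'"
      if "adm_monic W i" "t \<in> mor C" "dm C t = dm C i" for i t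
      using W[THEN conjunct2, THEN conjunct2, THEN conjunct2, THEN conjunct2, THEN conjunct2,
          THEN conjunct1, rule_format, OF that] .
  next
    show "\<exists>h' t'. is_pullback C h t h' t' \<and> adm_epic W h'"
      if "adm_epic W h" "t \<in> mor C" "cd C t = cd C h" for h t
      using W[THEN conjunct2, THEN conjunct2, THEN conjunct2, THEN conjunct2, THEN conjunct2,
          THEN conjunct2, rule_format, OF that] .
  qed
qed

lemma adm_monic_converse [simp]: "adm_monic (W\<inverse>) x = adm_epic W x"
  and adm_epic_converse [simp]: "adm_epic (W\<inverse>) x = adm_monic W x"
  unfolding adm_monic_def adm_epic_def by auto

context weakly_exact_core
begin

lemma iso_closed_converse:
  assumes di: "(d, i) \<in> W" and arrs: "arr i'" "arr d'" "dm C i' = cd C d'"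
    and homs: "\<alpha> \<in> hom C (cd C i') (cd C i)" "\<beta> \<in> hom C (dm C i') (dm C i)"
      "\<gamma> \<in> hom C (dm C d') (dm C d)"
    and isos: "iso C \<alpha>" "iso C \<beta>" "iso C \<gamma>"
    and sq: "cmp C i \<beta> = cmp C \<alpha> i'" "cmp C d \<gamma> = cmp C \<beta> d'"
  shows "(d', i') \<in> W"
proof -
  obtain \<alpha>' where \<alpha>': "arr \<alpha>'" "dm C \<alpha>' = cd C \<alpha>" "cd C \<alpha>' = dm C \<alpha>" "iso C \<alpha>'"
    "cmp C \<alpha>' \<alpha> = idt C (dm C \<alpha>)" "cmp C \<alpha> \<alpha>' = idt C (cd C \<alpha>)"
    using isoE[OF isos(1)] by metis
  obtain \<beta>' where \<beta>': "arr \<beta>'" "dm C \<beta>' = cd C \<beta>" "cd C \<beta>' = dm C \<beta>" "iso C \<beta>'"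
    "cmp C \<beta>' \<beta> = idt C (dm C \<beta>)" "cmp C \<beta> \<beta>' = idt C (cd C \<beta>)"
    using isoE[OF isos(2)] by metis
  obtain \<gamma>' where \<gamma>': "arr \<gamma>'" "dm C \<gamma>' = cd C \<gamma>" "cd C \<gamma>' = dm C \<gamma>" "iso C \<gamma>'"
    "cmp C \<gamma>' \<gamma> = idt C (dm C \<gamma>)" "cmp C \<gamma> \<gamma>' = idt C (cd C \<gamma>)"
    using isoE[OF isos(3)] by metis
  have D: "arr d" "arr i" "cd C d = dm C i"
    using kc_pair_W[OF di] unfolding kc_pair_def is_kernel_def by blast+
  show ?thesis
  proof (rule iso_closed[OF di arrs(2,1) arrs(3)[symmetric], of \<gamma>' \<beta>' \<alpha>'])
    show "cmp C \<beta>' d = cmp C d' \<gamma>'"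
      by (rule comp_inverse_square[of d d' \<gamma> \<beta> \<gamma>' \<beta>'])
        (use D arrs homs \<beta>' \<gamma>' sq in \<open>simp_all add: in_hom_iff\<close>)
    show "cmp C \<alpha>' i = cmp C i' \<beta>'"
      by (rule comp_inverse_square[of i i' \<beta> \<alpha> \<beta>' \<alpha>'])
        (use D arrs homs \<alpha>' \<beta>' sq in \<open>simp_all add: in_hom_iff\<close>)
  qed (use D arrs homs \<alpha>' \<beta>' \<gamma>' in \<open>auto simp: in_hom_iff\<close>)
qed

lemma weakly_exact_core_opc: "weakly_exact_core (opc C) (W\<inverse>)"
proof (unfold_locales, goal_cases)
  case 1
  then show ?case using preadditive_category_opc by (simp add: preadditive_category_def)
next
  case (2 i d)
  then show ?case using kc_pair_W[of d i] by (auto simp: kc_pair_def)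
next
  case (3 i d i' d' \<alpha> \<beta> \<gamma>)
  then show ?case using iso_closed_converse[of d i i' d' \<alpha> \<beta> \<gamma>] by simp
next
  case (4 i t)
  then show ?case using pullback_adm_epic[of i t] by auto
next
  case (5 h t)
  then show ?case using pushout_adm_monic[of h t] by auto
qed

lemma cokernel_swap:
  assumes xd: "(x, d) \<in> W" and d': "is_cokernel C d' x"
  shows "(x, d') \<in> W"
proof -
  have d: "is_cokernel C d x" using kc_pair_W[OF xd] unfolding kc_pair_def by blast
  then have D: "arr x" "arr d" "cd C x = dm C d"
    unfolding is_cokernel_def by blast+
  obtain g where g: "arr g" "iso C g" "dm C g = cd C d" "cd C g = cd C d'" "cmp C g d = d'"
    using cokernels_iso[OF d d'] by metis
  have D': "arr d'" "cd C x = dm C d'" using d' unfolding is_cokernel_def by blast+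
  show ?thesis
  proof (rule iso_closed[OF xd D(1) D', of "idt C (dm C x)" "idt C (cd C x)" g])
    show "cmp C g d = cmp C d' (idt C (cd C x))"
      using g D D' by simp
  qed (use g D D' in \<open>simp_all add: in_hom_iff iso_id\<close>)
qed

lemma kernel_swap: "(x, d) \<in> W \<Longrightarrow> is_kernel C x' d \<Longrightarrow> (x', d) \<in> W"
  using weakly_exact_core.cokernel_swap[OF weakly_exact_core_opc, of d x x'] by simp

lemma adm_epic_comp_iso:
  assumes e: "adm_epic W e" and \<theta>: "iso C \<theta>" "cd C \<theta> = dm C e"
  shows "adm_epic W (cmp C e \<theta>)"
proof -
  obtain x where xe: "(x, e) \<in> W" using e unfolding adm_epic_def by blast
  then have E: "arr x" "arr e" "cd C x = dm C e"
    using kc_pair_W unfolding kc_pair_def is_kernel_def by blast+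
  obtain \<theta>' where \<theta>': "arr \<theta>" "arr \<theta>'" "dm C \<theta>' = cd C \<theta>" "cd C \<theta>' = dm C \<theta>" "iso C \<theta>'"
    "cmp C \<theta> \<theta>' = idt C (cd C \<theta>)"
    using isoE[OF \<theta>(1)] by metis
  have "(cmp C \<theta>' x, cmp C e \<theta>) \<in> W"
  proof (rule iso_closed[OF xe, of _ _ "idt C (dm C x)" \<theta>' "idt C (cd C e)"])
    show "cmp C (idt C (cd C e)) e = cmp C (cmp C e \<theta>) \<theta>'"
      using E \<theta> \<theta>' by (simp add: comp_assoc[symmetric])
  qed (use E \<theta> \<theta>' in \<open>auto simp: in_hom_iff iso_id\<close>)
  then show ?thesis unfolding adm_epic_def by blast
qed

lemma kernel_if_adm_monic:
  "adm_monic W i \<Longrightarrow> is_cokernel C d i \<Longrightarrow> is_kernel C i d"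
  using cokernel_swap kc_pair_W unfolding adm_monic_def kc_pair_def by blast

lemma adm_monic_if_kernel_of_adm_epic:
  "adm_epic W d \<Longrightarrow> is_kernel C i d \<Longrightarrow> adm_monic W i"
  using kernel_swap unfolding adm_epic_def adm_monic_def by blast

lemma adm_epic_pullback:
  assumes p: "adm_epic W p" and pb: "is_pullback C p b k j"
  shows "adm_epic W k"
proof -
  have "arr b" "cd C b = cd C p"
    using pb unfolding is_pullback_def by blast+
  then obtain h' t' where pb': "is_pullback C p b h' t'" and "adm_epic W h'"
    using pullback_adm_epic[OF p] by blast
  obtain \<theta> where "iso C \<theta>" "cd C \<theta> = dm C h'" "cmp C h' \<theta> = k"
    using pullbacks_iso[OF pb pb'] by metis
  then show ?thesis
    using adm_epic_comp_iso[OF \<open>adm_epic W h'\<close>] by metis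
qed

lemma adm_monic_if_comp_adm_monic:
  assumes i: "arr i" and j: "arr j" "dm C j = cd C i"
    and "has_cokernel C i" and ji: "adm_monic W (cmp C j i)"
  shows "adm_monic W i"
proof -
  obtain k where k: "is_cokernel C k i"
    using \<open>has_cokernel C i\<close> unfolding has_cokernel_def by blast
  obtain p where "(cmp C j i, p) \<in> W"
    using ji unfolding adm_monic_def by blast
  then have m: "is_kernel C (cmp C j i) p" "is_cokernel C p (cmp C j i)" and p: "adm_epic W p"
    using kc_pair_W unfolding kc_pair_def adm_epic_def by blast+
  obtain t' i' where po: "is_pushout C (cmp C j i) i t' i'" and "adm_monic W i'"
    using pushout_adm_monic[OF ji i] i j by auto
  then obtain b where pb: "is_pullback C p b k j"
    using pushout_comp_pullback[OF po k j m(2)] kernel_if_adm_monic by blast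
  have "is_kernel C i k"
    by (rule pullback_kernel[OF pb m(1) i]) (use k j in \<open>simp_all add: is_cokernel_def\<close>)
  then show ?thesis
    using adm_monic_if_kernel_of_adm_epic adm_epic_pullback[OF p pb] by blast
qed

lemma adm_epic_if_comp_adm_epic:
  assumes "arr f" "arr g" "cd C f = dm C g" "has_kernel C g" "adm_epic W (cmp C g f)"
  shows "adm_epic W g"
  using weakly_exact_core.adm_monic_if_comp_adm_monic[OF weakly_exact_core_opc, of g f] assms
  by (simp add: has_kernel_def has_cokernel_def)

end

theorem mainTheorem3:
  fixes C :: "('o, 'm) precat" and W :: "('m \<times> 'm) set"
  assumes "additive_cat C" and "weakly_exact C W"
  shows "(\<forall>i j. i \<in> mor C \<longrightarrow> j \<in> mor C \<longrightarrow> cd C i = dm C j \<longrightarrow>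
            has_cokernel C i \<longrightarrow> adm_monic W (cmp C j i) \<longrightarrow> adm_monic W i) \<and>
         (\<forall>f g. f \<in> mor C \<longrightarrow> g \<in> mor C \<longrightarrow> cd C f = dm C g \<longrightarrow>
            has_kernel C g \<longrightarrow> adm_epic W (cmp C g f) \<longrightarrow> adm_epic W g)"
proof -
  have "preadditive C" using assms(1) unfolding additive_cat_def by blast
  then interpret weakly_exact_core C W
    using weakly_exact_core_if_weakly_exact assms(2) by blast
  show ?thesis
    using adm_monic_if_comp_adm_monic adm_epic_if_comp_adm_epic by auto
qed

end
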